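(* Under the setting in the context, for any $u\in\mathbb{R}^d$ and every $S\ge2$, $$KA_S(\bar f(\tilde y_S)-\bar f(u))\le\frac K2\|x_0-u\|^2-\frac{K(1+A_S\gamma)}{2}\|v_{S,K}-u\|^2-\frac K4\|v_{1,1}-v_{1,0}\|^2+\sum_{s=2}^S\sum_{k=1}^K E_{s,k}(u),$$ where $$E_{s,k}(u)=A_s(f(y_{s,k})-f(x_{s,k}))-A_{s-1}(f(\tilde y_{s-1})-f(x_{s,k}))+a_s\langle\nabla f(x_{s,k})-q_{s,k},x_{s,k}-u\rangle+a_s\langle q_{s,k},x_{s,k}-v_{s,k}\rangle-\frac{K(1+A_{s-1}\gamma)}{2}\|v_{s,k}-v_{s,k-1}\|^2.$$
   Context: Problem $\min_x\bar f(x)=f(x)+g(x)$, where $f:\mathbb{R}^d\to\mathbb{R}$ is convex, continuously differentiable and satisfies $f(y)\le f(x)+\langle\nabla f(x),y-x\rangle+\frac L2\|y-x\|^2$ for all $x,y$ (for a given $L>0$), and $g$ is proper, lower semicontinuous and $\gamma$-strongly convex ($\gamma\ge0$). Fix an integer $K\ge1$ and $x_0\in\mathrm{dom}(g)$. Let $a_0=A_0=0$, $a_1=A_1$ with $0<a_1\le\frac1{4L}$, and $a_s>0$ for $s\ge2$, $A_s=A_{s-1}+a_s$. Let $x_{1,1}=v_{1,0}=x_0$. Let $x_{s,k}\in\mathbb{R}^d$ ($s\ge2$, $k\in[K]$) and $q_{s,k}\in\mathbb{R}^d$ be arbitrary. Define $\psi_{1,0}(u)=\frac K2\|u-x_0\|^2$,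 $\psi_{1,1}(u)=\psi_{1,0}(u)+Ka_1(f(x_0)+\langle\nabla f(x_0),u-x_0\rangle+g(u))$, $\psi_{2,0}=\psi_{1,1}$, and for $s\ge2$, $1\le k\le K$: $\psi_{s,k}(u)=\psi_{s,k-1}(u)+a_s(f(x_{s,k})+\langle q_{s,k},u-x_{s,k}\rangle+g(u))$, with $\psi_{s+1,0}=\psi_{s,K}$. Let $v_{s,k}=\arg\min_u\psi_{s,k}(u)$ (so $v_{s+1,0}=v_{s,K}$). Let $\tilde y_1=v_{1,1}$, and for $s\ge2$: $y_{s,k}=\frac{A_{s-1}}{A_s}\tilde y_{s-1}+\frac{a_s}{A_s}v_{s,k}$ for $k\in[K]$ and $\tilde y_s=\frac1K\sum_{k=1}^Ky_{s,k}$. *)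

theory Defs
  imports "HOL-Analysis.Analysis" "HOL-Library.Extended_Real"
begin

text \<open>Extended-real valued functions (value \<infinity> outside the domain).\<close>

definition proper_fun :: "('a \<Rightarrow> ereal) \<Rightarrow> bool" where
  "proper_fun g \<longleftrightarrow> (\<forall>x. g x \<noteq> -\<infinity>) \<and> (\<exists>x. g x \<noteq> \<infinity>)"

definition lsc_fun :: "('a::topological_space \<Rightarrow> ereal) \<Rightarrow> bool" where
  "lsc_fun g \<longleftrightarrow> (\<forall>c. closed {x. g x \<le> c})"

definition strongly_convex_ereal :: "real \<Rightarrow> ('a::real_normed_vector \<Rightarrow> ereal) \<Rightarrow> bool" where
  "strongly_convex_ereal \<gamma> g \<longleftrightarrow>
     (\<forall>x y t. 0 \<le> t \<and> t \<le> 1 \<longrightarrow>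
        g (t *\<^sub>R x + (1 - t) *\<^sub>R y)
          \<le> ereal t * g x + ereal (1 - t) * g y - ereal (\<gamma> / 2 * t * (1 - t) * (norm (x - y))\<^sup>2))"

end

theory Submission
  imports Defs
begin

(* Each \<psi> s k has the form  K/2 * \<parallel>w - x0\<parallel>\<^sup>2 + (affine in w) + weight s k * g w,  so it is
   (K + weight s k * \<gamma>)-strongly convex and its minimizer v s k satisfies
   \<psi> s k (v s k) + (K + weight s k * \<gamma>)/2 * \<parallel>w - v s k\<parallel>\<^sup>2 \<le> \<psi> s k w.
   Applying this growth to \<psi> s (k - 1) at w = v s k, together with convexity of g along y s k
   and Jensen's inequality for the average yt s, bounds min \<psi> S K from below by
   K * A S * (f + g) (yt S) minus the accumulated errors.  From above, convexity of f bounds each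
   linearization added to \<psi> by (f + g) u plus the gradient error
   a s * \<langle>df (x s k) - q s k, x s k - u\<rangle>.  The growth of \<psi> S K at w = u joins the two bounds. *)

lemma convex_on_gradient_inequality:
  fixes f :: "'a::real_inner \<Rightarrow> real"
  assumes cvx: "convex_on UNIV f" and grad: "GDERIV f x :> D"
  shows "f x + inner D (y - x) \<le> f y"
proof -
  define \<phi> where "\<phi> t = f (x + t *\<^sub>R (y - x))" for t :: real
  have "convex_on UNIV \<phi>"
  proof (rule convex_onI)
    fix t s r :: real assume "0 < t" "t < 1"
    have "x + ((1 - t) *\<^sub>R s + t *\<^sub>R r) *\<^sub>R (y - x)
        = (1 - t) *\<^sub>R (x + s *\<^sub>R (y - x)) + t *\<^sub>R (x + r *\<^sub>R (y - x))"
      by (simp add: algebra_simps)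
    then show "\<phi> ((1 - t) *\<^sub>R s + t *\<^sub>R r) \<le> (1 - t) * \<phi> s + t * \<phi> r"
      unfolding \<phi>_def using convex_onD[OF cvx, of t] \<open>0 < t\<close> \<open>t < 1\<close> by simp
  qed simp
  moreover have "(\<phi> has_field_derivative inner (y - x) D) (at 0)"
  proof -
    have line: "((\<lambda>t. x + t *\<^sub>R (y - x)) has_derivative (\<lambda>t. t *\<^sub>R (y - x))) (at 0)"
      by (auto intro!: derivative_eq_intros)
    have "(f has_derivative (\<lambda>h. inner h D)) (at (x + 0 *\<^sub>R (y - x)))"
      using grad by (simp add: gderiv_def)
    from has_derivative_compose[OF line this]
    have "(\<phi> has_derivative (*) (inner (y - x) D)) (at 0)"
      unfolding \<phi>_def o_def
      by (rule has_derivative_eq_rhs) (auto simp: fun_eq_iff mult.commute)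
    then show ?thesis
      by (simp add: has_field_derivative_def)
  qed
  ultimately have "\<phi> 1 - \<phi> 0 \<ge> inner (y - x) D * (1 - 0)"
    by (intro convex_on_imp_above_tangent) auto
  then show ?thesis
    by (simp add: \<phi>_def inner_commute)
qed

lemma norm_convex_combination_squared:
  fixes a b :: "'a::real_inner"
  shows "(norm (t *\<^sub>R a + (1 - t) *\<^sub>R b))\<^sup>2
       = t * (norm a)\<^sup>2 + (1 - t) * (norm b)\<^sup>2 - t * (1 - t) * (norm (a - b))\<^sup>2"
  unfolding power2_norm_eq_inner
  by (simp add: inner_diff_left inner_diff_right inner_add_left inner_add_right
      inner_commute algebra_simps)

lemma minimizer_quadratic_growth:
  fixes h :: "'a::real_vector \<Rightarrow> real"
  assumes min: "\<And>t. 0 < t \<Longrightarrow> t < 1 \<Longrightarrow> h v \<le> h (t *\<^sub>R w + (1 - t) *\<^sub>R v)"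
    and sc: "\<And>t. 0 < t \<Longrightarrow> t < 1 \<Longrightarrow>
      h (t *\<^sub>R w + (1 - t) *\<^sub>R v) \<le> t * h w + (1 - t) * h v - \<mu> / 2 * t * (1 - t) * d"
  shows "h v + \<mu> / 2 * d \<le> h w"
proof -
  have "z * (\<mu> / 2 * d) \<le> h w - h v" if "0 < z" "z < 1" for z
  proof -
    have "h v \<le> (1 - z) * h w + z * h v - \<mu> / 2 * (1 - z) * z * d"
      using min[of "1 - z"] sc[of "1 - z"] that by simp
    then have "(1 - z) * (z * (\<mu> / 2 * d)) \<le> (1 - z) * (h w - h v)"
      by (simp add: algebra_simps)
    then show ?thesis
      using that by simp
  qed
  then show ?thesis
    using field_le_mult_one_interval[of "\<mu> / 2 * d" "h w - h v"] by simp
qed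

lemma strongly_convex_ereal_finite:
  fixes g :: "'a::real_normed_vector \<Rightarrow> ereal"
  assumes sc: "strongly_convex_ereal \<gamma> g" and no_minf: "\<And>w. g w \<noteq> -\<infinity>"
    and "g w \<noteq> \<infinity>" "g z \<noteq> \<infinity>" "0 \<le> t" "t \<le> 1"
  shows "g (t *\<^sub>R w + (1 - t) *\<^sub>R z) \<noteq> \<infinity>"
    and "real_of_ereal (g (t *\<^sub>R w + (1 - t) *\<^sub>R z))
      \<le> t * real_of_ereal (g w) + (1 - t) * real_of_ereal (g z)
         - \<gamma> / 2 * t * (1 - t) * (norm (w - z))\<^sup>2"
proof -
  obtain Gw Gz where "g w = ereal Gw" "g z = ereal Gz"
    using assms(3,4) no_minf[of w] no_minf[of z] by (cases "g w"; cases "g z") auto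
  moreover have "g (t *\<^sub>R w + (1 - t) *\<^sub>R z)
      \<le> ereal t * g w + ereal (1 - t) * g z - ereal (\<gamma> / 2 * t * (1 - t) * (norm (w - z))\<^sup>2)"
    using sc assms(5,6) unfolding strongly_convex_ereal_def by blast
  ultimately show "g (t *\<^sub>R w + (1 - t) *\<^sub>R z) \<noteq> \<infinity>"
    and "real_of_ereal (g (t *\<^sub>R w + (1 - t) *\<^sub>R z))
      \<le> t * real_of_ereal (g w) + (1 - t) * real_of_ereal (g z)
         - \<gamma> / 2 * t * (1 - t) * (norm (w - z))\<^sup>2"
    using no_minf[of "t *\<^sub>R w + (1 - t) *\<^sub>R z"]
    by (cases "g (t *\<^sub>R w + (1 - t) *\<^sub>R z)"; simp)+
qed

lemma strongly_convex_ereal_convex_dom: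
  fixes g :: "'a::real_normed_vector \<Rightarrow> ereal"
  assumes "strongly_convex_ereal \<gamma> g" "\<And>w. g w \<noteq> -\<infinity>"
  shows "convex {w. g w \<noteq> \<infinity>}"
proof (rule convexI)
  fix w z and s t :: real
  assume "w \<in> {w. g w \<noteq> \<infinity>}" "z \<in> {w. g w \<noteq> \<infinity>}" "0 \<le> s" "0 \<le> t" "s + t = 1"
  moreover from \<open>s + t = 1\<close> have "t = 1 - s" by simp
  ultimately show "s *\<^sub>R w + t *\<^sub>R z \<in> {w. g w \<noteq> \<infinity>}"
    using strongly_convex_ereal_finite(1)[OF assms, of w z s] by auto
qed

lemma strongly_convex_ereal_convex_on:
  fixes g :: "'a::real_normed_vector \<Rightarrow> ereal"
  assumes sc: "strongly_convex_ereal \<gamma> g" "\<And>w. g w \<noteq> -\<infinity>" and "\<gamma> \<ge> 0"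
  shows "convex_on {w. g w \<noteq> \<infinity>} (\<lambda>w. real_of_ereal (g w))"
proof (rule convex_onI)
  fix t :: real and w z assume "0 < t" "t < 1" "w \<in> {w. g w \<noteq> \<infinity>}" "z \<in> {w. g w \<noteq> \<infinity>}"
  then have "real_of_ereal (g ((1 - t) *\<^sub>R w + (1 - (1 - t)) *\<^sub>R z))
      \<le> (1 - t) * real_of_ereal (g w) + (1 - (1 - t)) * real_of_ereal (g z)
         - \<gamma> / 2 * (1 - t) * (1 - (1 - t)) * (norm (w - z))\<^sup>2"
    by (intro strongly_convex_ereal_finite(2)[OF sc]) auto
  moreover have "0 \<le> \<gamma> / 2 * (1 - t) * t * (norm (w - z))\<^sup>2"
    using \<open>\<gamma> \<ge> 0\<close> \<open>0 < t\<close> \<open>t < 1\<close> by simp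
  ultimately show "real_of_ereal (g ((1 - t) *\<^sub>R w + t *\<^sub>R z))
      \<le> (1 - t) * real_of_ereal (g w) + t * real_of_ereal (g z)"
    by simp
qed (rule strongly_convex_ereal_convex_dom[OF sc])

definition estimate_function ::
    "real \<Rightarrow> 'a::real_inner \<Rightarrow> ('a \<Rightarrow> ereal) \<Rightarrow> real \<Rightarrow> ('a \<Rightarrow> ereal) \<Rightarrow> bool" where
  "estimate_function \<sigma> x0 g c \<psi> \<longleftrightarrow>
     (\<exists>p b. \<forall>w. \<psi> w = ereal (\<sigma> / 2 * (norm (w - x0))\<^sup>2 + inner p w + b) + ereal c * g w)"

lemma estimate_function_add_linearization:
  assumes "estimate_function \<sigma> x0 g c \<psi>" and "\<And>w. g w \<noteq> -\<infinity>" and "c \<ge> 0" and "a > 0"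
    and "\<And>w. \<psi>' w = \<psi> w + ereal a * (ereal (\<beta> + inner q (w - z)) + g w)"
  shows "estimate_function \<sigma> x0 g (c + a) \<psi>'"
proof -
  obtain p b where \<psi>: "\<And>w. \<psi> w = ereal (\<sigma> / 2 * (norm (w - x0))\<^sup>2 + inner p w + b) + ereal c * g w"
    using assms(1) unfolding estimate_function_def by blast
  have "\<psi>' w = ereal (\<sigma> / 2 * (norm (w - x0))\<^sup>2 + inner (p + a *\<^sub>R q) w + (b + a * (\<beta> - inner q z)))
      + ereal (c + a) * g w" for w
    using assms(2)[of w] assms(3,4) unfolding assms(5) \<psi>
    by (cases "g w") (auto simp: inner_simps algebra_simps)
  then show ?thesis
    unfolding estimate_function_def by blast
qed

lemma estimate_function_finite:
  assumes "estimate_function \<sigma> x0 g c \<psi>" and "g w \<noteq> \<infinity>" and "g w \<noteq> -\<infinity>"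
  shows "\<psi> w = ereal (real_of_ereal (\<psi> w))"
  using assms by (cases "g w") (auto simp: estimate_function_def)

lemma estimate_function_minimizer_dom:
  assumes "estimate_function \<sigma> x0 g c \<psi>" and "\<And>w. g w \<noteq> -\<infinity>" and "c > 0"
    and "\<psi> v \<le> \<psi> z" and "g z \<noteq> \<infinity>"
  shows "g v \<noteq> \<infinity>"
proof
  assume "g v = \<infinity>"
  then have "\<psi> v = \<infinity>"
    using assms(1,3) unfolding estimate_function_def by auto
  moreover have "\<psi> z \<noteq> \<infinity>"
    using estimate_function_finite[OF assms(1,5) assms(2)] by (metis PInfty_neq_ereal(1))
  ultimately show False
    using assms(4) by simp
qed

lemma estimate_function_growth:
  fixes g :: "'a::real_inner \<Rightarrow> ereal"
  assumes est: "estimate_function \<sigma> x0 g c \<psi>"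
    and sc: "strongly_convex_ereal \<gamma> g" "\<And>w. g w \<noteq> -\<infinity>" and "c \<ge> 0"
    and min: "\<And>w. \<psi> v \<le> \<psi> w" and "g v \<noteq> \<infinity>" "g w \<noteq> \<infinity>"
  shows "real_of_ereal (\<psi> v) + (\<sigma> + c * \<gamma>) / 2 * (norm (w - v))\<^sup>2 \<le> real_of_ereal (\<psi> w)"
proof -
  obtain p b where \<psi>: "\<And>w. \<psi> w = ereal (\<sigma> / 2 * (norm (w - x0))\<^sup>2 + inner p w + b) + ereal c * g w"
    using est unfolding estimate_function_def by blast
  define Q where "Q w = \<sigma> / 2 * (norm (w - x0))\<^sup>2 + inner p w + b" for w
  define G where "G w = real_of_ereal (g w)" for w
  have \<psi>_real: "real_of_ereal (\<psi> w) = Q w + c * G w" if "g w \<noteq> \<infinity>" for w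
    using that sc(2)[of w] by (cases "g w") (auto simp: \<psi> Q_def G_def)
  show ?thesis
  proof (rule minimizer_quadratic_growth[where h = "\<lambda>w. real_of_ereal (\<psi> w)"])
    fix t :: real assume t: "0 < t" "t < 1"
    define z where "z = t *\<^sub>R w + (1 - t) *\<^sub>R v"
    have z_dom: "g z \<noteq> \<infinity>"
      unfolding z_def using strongly_convex_ereal_finite(1)[OF sc] assms(6,7) t by simp
    show "real_of_ereal (\<psi> v) \<le> real_of_ereal (\<psi> z)"
      using min[of z] estimate_function_finite[OF est z_dom sc(2)]
        estimate_function_finite[OF est \<open>g v \<noteq> \<infinity>\<close> sc(2)]
      by (metis ereal_less_eq(3))
    have "z - x0 = t *\<^sub>R (w - x0) + (1 - t) *\<^sub>R (v - x0)"
      by (simp add: z_def algebra_simps)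
    then have norm_z: "(norm (z - x0))\<^sup>2
        = t * (norm (w - x0))\<^sup>2 + (1 - t) * (norm (v - x0))\<^sup>2 - t * (1 - t) * (norm (w - v))\<^sup>2"
      by (simp add: norm_convex_combination_squared)
    have inner_z: "inner p z = t * inner p w + (1 - t) * inner p v"
      by (simp add: z_def inner_simps)
    have "Q z = t * Q w + (1 - t) * Q v - \<sigma> / 2 * t * (1 - t) * (norm (w - v))\<^sup>2"
      unfolding Q_def norm_z inner_z by (simp add: field_simps)
    moreover have "c * G z \<le> c * (t * G w + (1 - t) * G v - \<gamma> / 2 * t * (1 - t) * (norm (w - v))\<^sup>2)"
      using strongly_convex_ereal_finite(2)[OF sc assms(7,6), of t] t \<open>c \<ge> 0\<close>
      unfolding G_def z_def by (intro mult_left_mono) auto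
    ultimately show "real_of_ereal (\<psi> z) \<le> t * real_of_ereal (\<psi> w) + (1 - t) * real_of_ereal (\<psi> v)
        - (\<sigma> + c * \<gamma>) / 2 * t * (1 - t) * (norm (w - v))\<^sup>2"
      using \<psi>_real[OF z_dom] \<psi>_real[OF assms(6)] \<psi>_real[OF assms(7)]
      by (simp add: field_simps)
  qed
qed

(* The hypotheses of the theorem that the argument does not need (continuity of df, lower
   semicontinuity of g, a 0 = 0, x 1 1 = x0) are left out. *)

locale estimate_sequence_setting =
  fixes f :: "'a::real_inner \<Rightarrow> real"
    and df :: "'a \<Rightarrow> 'a"
    and g :: "'a \<Rightarrow> ereal"
    and L \<gamma> :: real
    and K :: nat
    and x0 :: 'a
    and a A :: "nat \<Rightarrow> real"
    and x q v y :: "nat \<Rightarrow> nat \<Rightarrow> 'a"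
    and yt :: "nat \<Rightarrow> 'a"
    and \<psi> :: "nat \<Rightarrow> nat \<Rightarrow> 'a \<Rightarrow> ereal"
  assumes f_convex: "convex_on UNIV f"
    and f_grad: "\<And>z. GDERIV f z :> df z"
    and L_pos: "L > 0"
    and f_smooth: "\<And>z w. f w \<le> f z + inner (df z) (w - z) + L / 2 * (norm (w - z))\<^sup>2"
    and g_proper: "proper_fun g"
    and \<gamma>_nonneg: "\<gamma> \<ge> 0"
    and g_sc: "strongly_convex_ereal \<gamma> g"
    and K_ge: "K \<ge> 1"
    and x0_dom: "g x0 \<noteq> \<infinity>"
    and a1_pos: "0 < a 1" and a1_le: "a 1 \<le> 1 / (4 * L)"
    and a_pos: "\<And>s. s \<ge> 2 \<Longrightarrow> a s > 0"
    and A0: "A 0 = 0"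
    and A_rec: "\<And>s. s \<ge> 1 \<Longrightarrow> A s = A (s - 1) + a s"
    and v10: "v 1 0 = x0"
    and psi10: "\<And>w. \<psi> 1 0 w = ereal (real K / 2 * (norm (w - x0))\<^sup>2)"
    and psi11: "\<And>w. \<psi> 1 1 w = \<psi> 1 0 w
                 + ereal (real K * a 1) * (ereal (f x0 + inner (df x0) (w - x0)) + g w)"
    and psi20: "\<And>w. \<psi> 2 0 w = \<psi> 1 1 w"
    and psi_step: "\<And>s k w. s \<ge> 2 \<Longrightarrow> 1 \<le> k \<Longrightarrow> k \<le> K \<Longrightarrow>
                 \<psi> s k w = \<psi> s (k - 1) w
                   + ereal (a s) * (ereal (f (x s k) + inner (q s k) (w - x s k)) + g w)"
    and psi_next: "\<And>s w. s \<ge> 2 \<Longrightarrow> \<psi> (s + 1) 0 w = \<psi> s K w"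
    and v_min1: "\<And>k w. k \<le> 1 \<Longrightarrow> \<psi> 1 k (v 1 k) \<le> \<psi> 1 k w"
    and v_min: "\<And>s k w. s \<ge> 2 \<Longrightarrow> k \<le> K \<Longrightarrow> \<psi> s k (v s k) \<le> \<psi> s k w"
    and yt1: "yt 1 = v 1 1"
    and y_def: "\<And>s k. s \<ge> 2 \<Longrightarrow> 1 \<le> k \<Longrightarrow> k \<le> K \<Longrightarrow>
                 y s k = (A (s - 1) / A s) *\<^sub>R yt (s - 1) + (a s / A s) *\<^sub>R v s k"
    and yt_def: "\<And>s. s \<ge> 2 \<Longrightarrow> yt s = (1 / real K) *\<^sub>R (\<Sum>k = 1..K. y s k)"
begin

definition dom_g :: "'a set" where
  "dom_g = {w. g w \<noteq> \<infinity>}"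

definition G :: "'a \<Rightarrow> real" where
  "G w = real_of_ereal (g w)"

definition F :: "'a \<Rightarrow> real" where
  "F w = f w + G w"

definition \<Phi> :: "nat \<Rightarrow> nat \<Rightarrow> 'a \<Rightarrow> real" where
  "\<Phi> s k w = real_of_ereal (\<psi> s k w)"

(* The coefficient of g in \<psi> s k. *)

definition weight :: "nat \<Rightarrow> nat \<Rightarrow> real" where
  "weight s k = real K * A (s - 1) + real k * a s"

definition linearization :: "nat \<Rightarrow> nat \<Rightarrow> 'a \<Rightarrow> real" where
  "linearization s k w = f (x s k) + inner (q s k) (w - x s k) + G w"

lemma g_not_minf: "g w \<noteq> -\<infinity>"
  using g_proper by (simp add: proper_fun_def)

lemma g_eq_G: "w \<in> dom_g \<Longrightarrow> g w = ereal (G w)"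
  using g_not_minf[of w] by (cases "g w") (auto simp: dom_g_def G_def)

lemma convex_dom_g: "convex dom_g"
  unfolding dom_g_def by (rule strongly_convex_ereal_convex_dom[OF g_sc g_not_minf])

lemma convex_on_G: "convex_on dom_g G"
  unfolding dom_g_def G_def
  by (rule strongly_convex_ereal_convex_on[OF g_sc g_not_minf \<gamma>_nonneg])

lemma K_pos: "real K > 0"
  using K_ge by simp

lemma a_pos': "s \<ge> 1 \<Longrightarrow> a s > 0"
  using a1_pos a_pos[of s] by (cases "s = 1") auto

lemma A_1: "A 1 = a 1"
  using A_rec[of 1] A0 by simp

lemma A_pos: "s \<ge> 1 \<Longrightarrow> A s > 0"
proof (induction s rule: nat_induct_at_least)
  case (Suc n)
  then show ?case using A_rec[of "Suc n"] a_pos'[of "Suc n"] by simp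
qed (use A_1 a1_pos in simp)

lemma A_nonneg: "A s \<ge> 0"
  using A_pos[of s] A0 by (cases s) auto

lemma sum_a: "s \<ge> 1 \<Longrightarrow> (\<Sum>s' = 2..s. a s') = A s - A 1"
proof (induction s rule: nat_induct_at_least)
  case (Suc n)
  then show ?case using A_rec[of "Suc n"] by (simp add: sum.cl_ivl_Suc)
qed simp

lemma weight_pos: "s \<ge> 2 \<Longrightarrow> weight s k > 0"
  using K_pos A_pos[of "s - 1"] a_pos[of s] unfolding weight_def
  by (intro add_pos_nonneg) auto

lemma weight_last: "s \<ge> 2 \<Longrightarrow> weight s K = real K * A s"
  using A_rec[of s] by (simp add: weight_def algebra_simps)

lemma estimate_function_psi11: "estimate_function K x0 g (real K * a 1) (\<psi> 1 1)"
proof -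
  have "\<psi> 1 0 w = ereal (real K / 2 * (norm (w - x0))\<^sup>2 + inner 0 w + 0) + ereal 0 * g w" for w
    using psi10[of w] by (simp add: zero_ereal_def[symmetric])
  then have "estimate_function K x0 g 0 (\<psi> 1 0)"
    unfolding estimate_function_def by blast
  then have "estimate_function K x0 g (0 + real K * a 1) (\<psi> 1 1)"
    using K_pos a1_pos psi11
    by (intro estimate_function_add_linearization[OF _ g_not_minf order_refl]) auto
  then show ?thesis
    by simp
qed

lemma estimate_function_psi_stage:
  assumes "s \<ge> 2" "k \<le> K" "estimate_function K x0 g (weight s 0) (\<psi> s 0)"
  shows "estimate_function K x0 g (weight s k) (\<psi> s k)"
  using assms(2)
proof (induction k)
  case (Suc k)
  have "estimate_function K x0 g (weight s k + a s) (\<psi> s (Suc k))"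
    using Suc assms(1) psi_step[of s "Suc k"] weight_pos[of s k] a_pos[of s]
    by (intro estimate_function_add_linearization[OF _ g_not_minf]) auto
  then show ?case
    by (simp add: weight_def algebra_simps)
qed (use assms(3) in simp)

lemma estimate_function_psi:
  "s \<ge> 2 \<Longrightarrow> k \<le> K \<Longrightarrow> estimate_function K x0 g (weight s k) (\<psi> s k)"
proof (induction s arbitrary: k rule: nat_induct_at_least)
  case base
  have "\<psi> 2 0 = \<psi> 1 1"
    using psi20 by (rule ext)
  then have "estimate_function K x0 g (weight 2 0) (\<psi> 2 0)"
    using estimate_function_psi11 A_1 by (simp add: weight_def)
  then show ?case
    by (rule estimate_function_psi_stage[rotated 2]) (use base in simp_all)
next
  case (Suc s)
  have "\<psi> (Suc s) 0 = \<psi> s K"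
    using psi_next[OF Suc(1)] by (simp add: fun_eq_iff)
  moreover have "weight (Suc s) 0 = weight s K"
    using weight_last[OF Suc(1)] by (simp add: weight_def)
  ultimately have "estimate_function K x0 g (weight (Suc s) 0) (\<psi> (Suc s) 0)"
    using Suc.IH[of K] Suc.hyps by simp
  then show ?case
    by (rule estimate_function_psi_stage[rotated 2]) (use Suc in simp_all)
qed

lemma v_dom: "s \<ge> 2 \<Longrightarrow> k \<le> K \<Longrightarrow> v s k \<in> dom_g"
  using estimate_function_minimizer_dom[OF estimate_function_psi g_not_minf weight_pos v_min x0_dom]
  by (simp add: dom_g_def)

lemma v11_dom: "v 1 1 \<in> dom_g"
  using estimate_function_minimizer_dom[OF estimate_function_psi11 g_not_minf _ v_min1 x0_dom]
    K_pos a1_pos by (simp add: dom_g_def)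

lemma psi_finite: "s \<ge> 2 \<Longrightarrow> k \<le> K \<Longrightarrow> w \<in> dom_g \<Longrightarrow> \<psi> s k w = ereal (\<Phi> s k w)"
  unfolding \<Phi>_def dom_g_def
  by (rule estimate_function_finite[OF estimate_function_psi _ g_not_minf]) auto

lemma Phi_step:
  assumes "s \<ge> 2" "1 \<le> k" "k \<le> K" "w \<in> dom_g"
  shows "\<Phi> s k w = \<Phi> s (k - 1) w + a s * linearization s k w"
proof -
  have "\<psi> s k w = ereal (\<Phi> s (k - 1) w + a s * linearization s k w)"
    using psi_step[OF assms(1-3), of w] psi_finite[of s "k - 1" w] g_eq_G[of w] assms
    by (simp add: linearization_def)
  then show ?thesis
    by (simp add: \<Phi>_def)
qed

lemma Phi_11:
  "w \<in> dom_g \<Longrightarrow>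
    \<Phi> 1 1 w = real K / 2 * (norm (w - x0))\<^sup>2 + real K * a 1 * (f x0 + inner (df x0) (w - x0) + G w)"
  using psi11[of w] psi10[of w] g_eq_G[of w] by (simp add: \<Phi>_def)

lemma Phi_unroll:
  assumes "s \<ge> 2" "k \<le> K" "w \<in> dom_g"
  shows "\<Phi> s k w = \<Phi> s 0 w + (\<Sum>j = 1..k. a s * linearization s j w)"
  using assms(2)
proof (induction k)
  case (Suc k)
  then show ?case
    using Phi_step[OF assms(1) _ Suc.prems assms(3)] by (simp add: sum.cl_ivl_Suc)
qed simp

lemma Phi_unroll_stages:
  assumes "s \<ge> 1" "w \<in> dom_g"
  shows "\<Phi> (Suc s) 0 w = \<Phi> 1 1 w + (\<Sum>s' = 2..s. \<Sum>j = 1..K. a s' * linearization s' j w)"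
  using assms(1)
proof (induction s rule: nat_induct_at_least)
  case base
  then show ?case
    using psi20[of w] by (simp add: \<Phi>_def numeral_2_eq_2)
next
  case (Suc s)
  have "\<Phi> (Suc (Suc s)) 0 w = \<Phi> (Suc s) K w"
    using psi_next[of "Suc s" w] Suc by (simp add: \<Phi>_def)
  also have "\<dots> = \<Phi> (Suc s) 0 w + (\<Sum>j = 1..K. a (Suc s) * linearization (Suc s) j w)"
    using Phi_unroll[of "Suc s" K w] Suc assms(2) by simp
  finally show ?case
    using Suc by (simp add: sum.cl_ivl_Suc)
qed

lemma min_Phi_20: "\<Phi> 2 0 (v 2 0) = \<Phi> 1 1 (v 1 1)"
  using v_min[of 2 0 "v 1 1"] v_min1[of 1 "v 2 0"] psi20 antisym
  by (fastforce simp: \<Phi>_def)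

lemma min_Phi_next: "s \<ge> 2 \<Longrightarrow> \<Phi> (Suc s) 0 (v (Suc s) 0) = \<Phi> s K (v s K)"
  using v_min[of "Suc s" 0 "v s K"] v_min[of s K "v (Suc s) 0"] psi_next[of s] antisym
  by (fastforce simp: \<Phi>_def)

lemma Phi_growth:
  assumes "s \<ge> 2" "k \<le> K" "w \<in> dom_g"
  shows "\<Phi> s k (v s k) + (real K + weight s k * \<gamma>) / 2 * (norm (w - v s k))\<^sup>2 \<le> \<Phi> s k w"
  unfolding \<Phi>_def
  using estimate_function_growth[OF estimate_function_psi[OF assms(1,2)] g_sc g_not_minf
      less_imp_le[OF weight_pos[OF assms(1)]] v_min[OF assms(1,2)]] v_dom[OF assms(1,2)] assms(3)
  by (simp add: dom_g_def)

lemma Phi_min_chain: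
  assumes "s \<ge> 2" "k \<le> K"
  shows "\<Phi> s 0 (v s 0)
      + (\<Sum>j = 1..k. real K * (1 + A (s - 1) * \<gamma>) / 2 * (norm (v s j - v s (j - 1)))\<^sup>2
                     + a s * linearization s j (v s j))
    \<le> \<Phi> s k (v s k)"
  using assms(2)
proof (induction k)
  case (Suc k)
  have "real K * (1 + A (s - 1) * \<gamma>) \<le> real K + weight s k * \<gamma>"
    using \<gamma>_nonneg a_pos[OF assms(1)] by (simp add: weight_def algebra_simps)
  then have "real K * (1 + A (s - 1) * \<gamma>) / 2 * (norm (v s (Suc k) - v s k))\<^sup>2
      \<le> (real K + weight s k * \<gamma>) / 2 * (norm (v s (Suc k) - v s k))\<^sup>2"
    by (intro mult_right_mono) auto
  moreover have "\<Phi> s (Suc k) (v s (Suc k))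
      = \<Phi> s k (v s (Suc k)) + a s * linearization s (Suc k) (v s (Suc k))"
    using Phi_step[OF assms(1) _ Suc.prems v_dom[OF assms(1) Suc.prems]] by simp
  ultimately show ?case
    using Suc Phi_growth[OF assms(1) _ v_dom[OF assms(1) Suc.prems], of k]
    by (simp add: sum.cl_ivl_Suc)
qed simp

(* The paper's error term E s k u without its only u-dependent summand
   a s * \<langle>df (x s k) - q s k, x s k - u\<rangle>. *)

definition step_error :: "nat \<Rightarrow> nat \<Rightarrow> real" where
  "step_error s k = A s * (f (y s k) - f (x s k)) - A (s - 1) * (f (yt (s - 1)) - f (x s k))
     + a s * inner (q s k) (x s k - v s k)
     - real K * (1 + A (s - 1) * \<gamma>) / 2 * (norm (v s k - v s (k - 1)))\<^sup>2"

definition lower_estimate :: "nat \<Rightarrow> real" where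
  "lower_estimate s = real K * A s * F (yt s) + real K / 4 * (norm (v 1 1 - v 1 0))\<^sup>2
     - (\<Sum>s' = 2..s. \<Sum>k = 1..K. step_error s' k)"

lemma convex_on_F: "convex_on dom_g F"
  unfolding F_def
  by (intro convex_on_add convex_on_subset[OF f_convex] convex_on_G convex_dom_g) auto

lemma lower_estimate_first: "lower_estimate 1 \<le> \<Phi> 1 1 (v 1 1)"
proof -
  define n where "n = (norm (v 1 1 - x0))\<^sup>2"
  have "a 1 * L \<le> 1 / 4"
    using a1_le L_pos by (simp add: field_simps)
  then have "a 1 * L * (real K * n) \<le> 1 / 4 * (real K * n)"
    by (rule mult_right_mono) (simp add: n_def)
  moreover have "0 \<le> real K * n"
    by (simp add: n_def)
  ultimately have "real K * a 1 * (L / 2 * n) \<le> real K / 4 * n"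
    by (simp add: algebra_simps)
  moreover have "real K * a 1 * f (v 1 1)
      \<le> real K * a 1 * (f x0 + inner (df x0) (v 1 1 - x0) + L / 2 * n)"
    using f_smooth[where z = x0 and w = "v 1 1"] K_pos a1_pos by (simp add: n_def)
  ultimately show ?thesis
    using Phi_11[OF v11_dom] A_1 yt1 v10
    by (simp add: lower_estimate_def F_def n_def algebra_simps)
qed

lemma y_dom_G_le:
  assumes "s \<ge> 2" "k \<in> {1..K}" "yt (s - 1) \<in> dom_g"
  shows "y s k \<in> dom_g" and "A s * G (y s k) \<le> A (s - 1) * G (yt (s - 1)) + a s * G (v s k)"
proof -
  define t where "t = a s / A s"
  have A_s: "A s = A (s - 1) + a s" and "A s > 0" "a s > 0"
    using A_rec[of s] A_pos[of s] a_pos[of s] assms(1) by auto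
  then have t: "0 \<le> t" "t \<le> 1" "1 - t = A (s - 1) / A s"
    using A_nonneg[of "s - 1"] by (auto simp: t_def field_simps)
  have y: "y s k = (1 - t) *\<^sub>R yt (s - 1) + t *\<^sub>R v s k"
    using y_def[of s k] assms(1,2) unfolding t(3)[symmetric] t_def[symmetric] by simp
  have v: "v s k \<in> dom_g"
    using v_dom assms(1,2) by simp
  show "y s k \<in> dom_g"
    unfolding y using convexD[OF convex_dom_g assms(3) v] t by simp
  have "G (y s k) \<le> (1 - t) * G (yt (s - 1)) + t * G (v s k)"
    unfolding y by (rule convex_onD[OF convex_on_G t(1,2) assms(3) v])
  then have "A s * G (y s k) \<le> A s * ((1 - t) * G (yt (s - 1)) + t * G (v s k))"
    using \<open>A s > 0\<close> by (simp add: mult_left_mono)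
  also have "A s * ((1 - t) * G (yt (s - 1)) + t * G (v s k))
      = A (s - 1) * G (yt (s - 1)) + a s * G (v s k)"
    using \<open>A s > 0\<close> unfolding t(3) by (simp add: t_def field_simps)
  finally show "A s * G (y s k) \<le> A (s - 1) * G (yt (s - 1)) + a s * G (v s k)" .
qed

lemma yt_dom_F_le:
  assumes "s \<ge> 2" "yt (s - 1) \<in> dom_g"
  shows "yt s \<in> dom_g" and "real K * F (yt s) \<le> (\<Sum>k = 1..K. F (y s k))"
proof -
  have yt: "yt s = (\<Sum>k = 1..K. (1 / real K) *\<^sub>R y s k)"
    using yt_def[OF assms(1)] by (simp add: scaleR_sum_right)
  have weights: "(\<Sum>k = 1..K. 1 / real K) = 1"
    using K_pos by simp
  have y: "y s k \<in> dom_g" if "k \<in> {1..K}" for k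
    using y_dom_G_le(1)[OF assms(1) that assms(2)] .
  show "yt s \<in> dom_g"
    unfolding yt by (rule convex_sum[OF _ convex_dom_g weights]) (auto intro: y)
  have "F (yt s) \<le> (\<Sum>k = 1..K. 1 / real K * F (y s k))"
    unfolding yt using K_ge y by (intro convex_on_sum[OF _ _ convex_on_F weights]) auto
  then show "real K * F (yt s) \<le> (\<Sum>k = 1..K. F (y s k))"
    using K_pos by (simp add: sum_divide_distrib[symmetric] field_simps)
qed

lemma step_error_bound:
  assumes "s \<ge> 2" "k \<in> {1..K}" "yt (s - 1) \<in> dom_g"
  shows "A s * F (y s k) - step_error s k
    \<le> A (s - 1) * F (yt (s - 1))
       + (real K * (1 + A (s - 1) * \<gamma>) / 2 * (norm (v s k - v s (k - 1)))\<^sup>2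
          + a s * linearization s k (v s k))"
  using y_dom_G_le(2)[OF assms] A_rec[of s] assms(1)
  by (simp add: F_def linearization_def step_error_def inner_diff_right algebra_simps)

lemma lower_estimate_step:
  assumes "s \<ge> 2" "lower_estimate (s - 1) \<le> \<Phi> s 0 (v s 0)" "yt (s - 1) \<in> dom_g"
  shows "lower_estimate s \<le> \<Phi> s K (v s K)"
proof -
  define increment where "increment k =
    real K * (1 + A (s - 1) * \<gamma>) / 2 * (norm (v s k - v s (k - 1)))\<^sup>2
      + a s * linearization s k (v s k)" for k
  have "real K * A s * F (yt s) \<le> (\<Sum>k = 1..K. A s * F (y s k))"
    using yt_dom_F_le(2)[OF assms(1,3)] A_pos[of s] assms(1)
    by (simp add: sum_distrib_left[symmetric] mult_left_mono mult.assoc[symmetric])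
  moreover have "(\<Sum>k = 1..K. A s * F (y s k) - step_error s k)
      \<le> (\<Sum>k = 1..K. A (s - 1) * F (yt (s - 1)) + increment k)"
    unfolding increment_def by (intro sum_mono step_error_bound[OF assms(1) _ assms(3)])
  moreover have "lower_estimate s = lower_estimate (s - 1) + real K * A s * F (yt s)
      - real K * A (s - 1) * F (yt (s - 1)) - (\<Sum>k = 1..K. step_error s k)"
    using assms(1) sum.atLeast_Suc_atMost[of 2 s]
    by (cases s) (simp_all add: lower_estimate_def sum.cl_ivl_Suc)
  ultimately have "lower_estimate s \<le> lower_estimate (s - 1) + (\<Sum>k = 1..K. increment k)"
    by (simp add: sum.distrib sum_subtractf)
  also have "\<dots> \<le> \<Phi> s K (v s K)"
    using assms(2) Phi_min_chain[OF assms(1) order_refl] by (simp add: increment_def)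
  finally show ?thesis .
qed

lemma lower_estimate_bound:
  "s \<ge> 1 \<Longrightarrow> lower_estimate s \<le> \<Phi> (Suc s) 0 (v (Suc s) 0) \<and> yt s \<in> dom_g"
proof (induction s rule: nat_induct_at_least)
  case base
  then show ?case
    using lower_estimate_first min_Phi_20 yt1 v11_dom by (simp add: numeral_2_eq_2)
next
  case (Suc s)
  then show ?case
    using lower_estimate_step[of "Suc s"] min_Phi_next[of "Suc s"] yt_dom_F_le(1)[of "Suc s"]
    by simp
qed

lemma linearization_le:
  assumes "s \<ge> 2" "u \<in> dom_g"
  shows "a s * linearization s k u \<le> a s * F u + a s * inner (df (x s k) - q s k) (x s k - u)"
proof -
  have "a s * (f (x s k) + inner (df (x s k)) (u - x s k)) \<le> a s * f u"
    using convex_on_gradient_inequality[OF f_convex f_grad] a_pos[OF assms(1)]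
    by (simp add: mult_left_mono)
  then show ?thesis
    by (simp add: linearization_def F_def inner_diff_left inner_diff_right algebra_simps)
qed

lemma Phi_upper_bound:
  assumes "S \<ge> 2" "u \<in> dom_g"
  shows "\<Phi> S K u \<le> real K / 2 * (norm (x0 - u))\<^sup>2 + real K * A S * F u
    + (\<Sum>s = 2..S. \<Sum>k = 1..K. a s * inner (df (x s k) - q s k) (x s k - u))"
proof -
  have "real K * a 1 * (f x0 + inner (df x0) (u - x0)) \<le> real K * a 1 * f u"
    using convex_on_gradient_inequality[OF f_convex f_grad] K_pos a1_pos
    by (simp add: mult_left_mono)
  then have first: "\<Phi> 1 1 u \<le> real K / 2 * (norm (x0 - u))\<^sup>2 + real K * a 1 * F u"
    using Phi_11[OF assms(2)] by (simp add: F_def norm_minus_commute algebra_simps)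
  have "(\<Sum>s = 2..S. \<Sum>k = 1..K. a s * linearization s k u)
      \<le> (\<Sum>s = 2..S. \<Sum>k = 1..K. a s * F u + a s * inner (df (x s k) - q s k) (x s k - u))"
    using linearization_le[OF _ assms(2)] by (intro sum_mono) auto
  also have "\<dots> = real K * (A S - A 1) * F u
      + (\<Sum>s = 2..S. \<Sum>k = 1..K. a s * inner (df (x s k) - q s k) (x s k - u))"
    using sum_a[of S] assms(1)
    by (simp add: sum.distrib sum_distrib_left[symmetric] sum_distrib_right[symmetric])
  finally have rest: "(\<Sum>s = 2..S. \<Sum>k = 1..K. a s * linearization s k u) \<le> \<dots>" .
  have "\<Phi> S K u = \<Phi> 1 1 u + (\<Sum>s = 2..S. \<Sum>k = 1..K. a s * linearization s k u)"
    using psi_next[OF assms(1)] Phi_unroll_stages[of S u] assms by (simp add: \<Phi>_def)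
  then show ?thesis
    using first rest A_1 by (simp add: algebra_simps)
qed

theorem estimate_sequence_bound:
  assumes "S \<ge> 2"
  shows "ereal (real K * A S) * ((ereal (f (yt S)) + g (yt S)) - (ereal (f u) + g u))
         \<le> ereal (real K / 2 * (norm (x0 - u))\<^sup>2
                  - real K * (1 + A S * \<gamma>) / 2 * (norm (v S K - u))\<^sup>2
                  - real K / 4 * (norm (v 1 1 - v 1 0))\<^sup>2
                  + (\<Sum>s = 2..S. \<Sum>k = 1..K.
                       A s * (f (y s k) - f (x s k))
                       - A (s - 1) * (f (yt (s - 1)) - f (x s k))
                       + a s * inner (df (x s k) - q s k) (x s k - u)
                       + a s * inner (q s k) (x s k - v s k)
                       - real K * (1 + A (s - 1) * \<gamma>) / 2 * (norm (v s k - v s (k - 1)))\<^sup>2))"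
proof -
  have yt_S: "yt S \<in> dom_g" and lower: "lower_estimate S \<le> \<Phi> S K (v S K)"
    using lower_estimate_bound[of S] min_Phi_next[OF assms] assms by auto
  show ?thesis
  proof (cases "u \<in> dom_g")
    case False
    then show ?thesis
      using g_eq_G[OF yt_S] A_pos[of S] assms by (simp add: dom_g_def)
  next
    case True
    have growth:
      "\<Phi> S K (v S K) + real K * (1 + A S * \<gamma>) / 2 * (norm (v S K - u))\<^sup>2 \<le> \<Phi> S K u"
      using Phi_growth[OF assms order_refl True] weight_last[OF assms]
      by (simp add: norm_minus_commute algebra_simps)
    have errors: "(\<Sum>s = 2..S. \<Sum>k = 1..K. step_error s k)
        + (\<Sum>s = 2..S. \<Sum>k = 1..K. a s * inner (df (x s k) - q s k) (x s k - u))
      = (\<Sum>s = 2..S. \<Sum>k = 1..K.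
           A s * (f (y s k) - f (x s k))
           - A (s - 1) * (f (yt (s - 1)) - f (x s k))
           + a s * inner (df (x s k) - q s k) (x s k - u)
           + a s * inner (q s k) (x s k - v s k)
           - real K * (1 + A (s - 1) * \<gamma>) / 2 * (norm (v s k - v s (k - 1)))\<^sup>2)"
      by (simp add: sum.distrib[symmetric] step_error_def algebra_simps)
    have "real K * A S * F (yt S) - real K * A S * F u
        \<le> real K / 2 * (norm (x0 - u))\<^sup>2 - real K * (1 + A S * \<gamma>) / 2 * (norm (v S K - u))\<^sup>2
           - real K / 4 * (norm (v 1 1 - v 1 0))\<^sup>2
           + ((\<Sum>s = 2..S. \<Sum>k = 1..K. step_error s k)
              + (\<Sum>s = 2..S. \<Sum>k = 1..K. a s * inner (df (x s k) - q s k) (x s k - u)))"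
      using lower growth Phi_upper_bound[OF assms True] unfolding lower_estimate_def by linarith
    then show ?thesis
      unfolding errors using g_eq_G[OF yt_S] g_eq_G[OF True]
      by (simp add: F_def algebra_simps)
  qed
qed

end

theorem lemma5:
  fixes f :: "'a::euclidean_space \<Rightarrow> real"
    and df :: "'a \<Rightarrow> 'a"
    and g :: "'a \<Rightarrow> ereal"
    and L \<gamma> :: real
    and K S :: nat
    and x0 u :: 'a
    and a A :: "nat \<Rightarrow> real"
    and x q v y :: "nat \<Rightarrow> nat \<Rightarrow> 'a"
    and yt :: "nat \<Rightarrow> 'a"
    and \<psi> :: "nat \<Rightarrow> nat \<Rightarrow> 'a \<Rightarrow> ereal"
  assumes f_convex: "convex_on UNIV f"
    and f_grad: "\<And>z. GDERIV f z :> df z"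
    and df_cont: "continuous_on UNIV df"
    and L_pos: "L > 0"
    and f_smooth: "\<And>z w. f w \<le> f z + inner (df z) (w - z) + L / 2 * (norm (w - z))\<^sup>2"
    and g_proper: "proper_fun g"
    and g_lsc: "lsc_fun g"
    and \<gamma>_nonneg: "\<gamma> \<ge> 0"
    and g_sc: "strongly_convex_ereal \<gamma> g"
    and K_ge: "K \<ge> 1"
    and x0_dom: "g x0 \<noteq> \<infinity>"
    and a0: "a 0 = 0"
    and a1_pos: "0 < a 1" and a1_le: "a 1 \<le> 1 / (4 * L)"
    and a_pos: "\<And>s. s \<ge> 2 \<Longrightarrow> a s > 0"
    and A0: "A 0 = 0"
    and A_rec: "\<And>s. s \<ge> 1 \<Longrightarrow> A s = A (s - 1) + a s"
    and x11: "x 1 1 = x0"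
    and v10: "v 1 0 = x0"
    and psi10: "\<And>w. \<psi> 1 0 w = ereal (real K / 2 * (norm (w - x0))\<^sup>2)"
    and psi11: "\<And>w. \<psi> 1 1 w = \<psi> 1 0 w
                 + ereal (real K * a 1) * (ereal (f x0 + inner (df x0) (w - x0)) + g w)"
    and psi20: "\<And>w. \<psi> 2 0 w = \<psi> 1 1 w"
    and psi_step: "\<And>s k w. s \<ge> 2 \<Longrightarrow> 1 \<le> k \<Longrightarrow> k \<le> K \<Longrightarrow>
                 \<psi> s k w = \<psi> s (k - 1) w
                   + ereal (a s) * (ereal (f (x s k) + inner (q s k) (w - x s k)) + g w)"
    and psi_next: "\<And>s w. s \<ge> 2 \<Longrightarrow> \<psi> (s + 1) 0 w = \<psi> s K w"
    and v_min1: "\<And>k w. k \<le> 1 \<Longrightarrow> \<psi> 1 k (v 1 k) \<le> \<psi> 1 k w"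
    and v_min: "\<And>s k w. s \<ge> 2 \<Longrightarrow> k \<le> K \<Longrightarrow> \<psi> s k (v s k) \<le> \<psi> s k w"
    and yt1: "yt 1 = v 1 1"
    and y_def: "\<And>s k. s \<ge> 2 \<Longrightarrow> 1 \<le> k \<Longrightarrow> k \<le> K \<Longrightarrow>
                 y s k = (A (s - 1) / A s) *\<^sub>R yt (s - 1) + (a s / A s) *\<^sub>R v s k"
    and yt_def: "\<And>s. s \<ge> 2 \<Longrightarrow> yt s = (1 / real K) *\<^sub>R (\<Sum>k = 1..K. y s k)"
    and S_ge: "S \<ge> 2"
  shows "ereal (real K * A S) * ((ereal (f (yt S)) + g (yt S)) - (ereal (f u) + g u))
         \<le> ereal (real K / 2 * (norm (x0 - u))\<^sup>2
                  - real K * (1 + A S * \<gamma>) / 2 * (norm (v S K - u))\<^sup>2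
                  - real K / 4 * (norm (v 1 1 - v 1 0))\<^sup>2
                  + (\<Sum>s = 2..S. \<Sum>k = 1..K.
                       A s * (f (y s k) - f (x s k))
                       - A (s - 1) * (f (yt (s - 1)) - f (x s k))
                       + a s * inner (df (x s k) - q s k) (x s k - u)
                       + a s * inner (q s k) (x s k - v s k)
                       - real K * (1 + A (s - 1) * \<gamma>) / 2 * (norm (v s k - v s (k - 1)))\<^sup>2))"
proof -
  interpret estimate_sequence_setting f df g L \<gamma> K x0 a A x q v y yt \<psi>
    by unfold_locales
      (fact f_convex f_grad L_pos f_smooth g_proper \<gamma>_nonneg g_sc K_ge x0_dom a1_pos a1_le a_pos
        A0 A_rec v10 psi10 psi11 psi20 psi_step psi_next v_min1 v_min yt1 y_def yt_def)+
  show ?thesis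
    using S_ge by (rule estimate_sequence_bound)
qed

end
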